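(* Let $d\ge3$, $h\ge1$, and for $1\le n\le h$ let $\mathbf{y}_n := \sum_{i\in S_n}\mathbf{x}_i$, where $S_n$ is the set of vertices at distance $n$ from the root. Then the order of $\bar{\mathbf{y}}_n$ in $G(d,h)$ is $(d-1)^{h+1-n}$.
   Context: Let $\mathcal{T}(d,h)$ be the rooted tree in which the root $0$ has $d$ children, every vertex at distance $1,\dots,h-1$ from the root has $d-1$ children, and the vertices at distance $h$ are leaves. Let $V$ be its vertex set, $A$ its adjacency matrix, $\Delta := dI-A$, and $\Lambda\subset\mathbb{Z}^V$ the lattice spanned by the rows of $\Delta$. Then $G(d,h):=\mathbb{Z}^V/\Lambda$; $\{\mathbf{x}_i:i\in V\}$ is the standard basis of $\mathbb{Z}^V$ and $\bar{\mathbf{v}}$ denotes the image of $\mathbf{v}\in\mathbb{Z}^V$ in $G(d,h)$. *)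

theory Defs
  imports Main
begin

text \<open>Vertices of T(d,h) are encoded as paths from the root: the root is [],
  the children of xs are xs @ [j] with j < d if xs = [] and j < d - 1 otherwise.
  The distance of a vertex from the root is the length of its path.\<close>

definition tree_vertices :: "nat \<Rightarrow> nat \<Rightarrow> nat list set" where
  "tree_vertices d h =
     {xs. length xs \<le> h \<and> (\<forall>k<length xs. xs ! k < (if k = 0 then d else d - 1))}"

definition tree_adj :: "nat \<Rightarrow> nat \<Rightarrow> nat list \<Rightarrow> nat list \<Rightarrow> int" where
  "tree_adj d h u v =
     (if u \<in> tree_vertices d h \<and> v \<in> tree_vertices d h \<and>
         ((\<exists>j. v = u @ [j]) \<or> (\<exists>j. u = v @ [j])) then 1 else 0)"

definition tree_Delta :: "nat \<Rightarrow> nat \<Rightarrow> nat list \<Rightarrow> nat list \<Rightarrow> int" where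
  "tree_Delta d h u v = (if u = v then int d else 0) - tree_adj d h u v"

text \<open>Membership in the lattice Lambda spanned over Z by the rows of Delta
  (vectors in Z^V are functions on V; values outside V are ignored).\<close>
definition in_tree_lattice :: "nat \<Rightarrow> nat \<Rightarrow> (nat list \<Rightarrow> int) \<Rightarrow> bool" where
  "in_tree_lattice d h v \<longleftrightarrow>
     (\<exists>c :: nat list \<Rightarrow> int. \<forall>w\<in>tree_vertices d h.
        v w = (\<Sum>u\<in>tree_vertices d h. c u * tree_Delta d h u w))"

text \<open>Order of the class of v in G(d,h) = Z^V / Lambda
  (0 if the class has infinite order, as for HOL-Algebra's ord).\<close>
definition tree_group_order :: "nat \<Rightarrow> nat \<Rightarrow> (nat list \<Rightarrow> int) \<Rightarrow> nat" where
  "tree_group_order d h v =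
     (if \<exists>k>0. in_tree_lattice d h (\<lambda>w. int k * v w)
      then LEAST k. k > 0 \<and> in_tree_lattice d h (\<lambda>w. int k * v w)
      else 0)"

definition level_vector :: "nat \<Rightarrow> nat \<Rightarrow> nat \<Rightarrow> nat list \<Rightarrow> int" where
  "level_vector d h n w = (if w \<in> tree_vertices d h \<and> length w = n then 1 else 0)"

end

theory Submission
  imports Defs
begin

(* Put q = d - 1.  On functions of the level, Delta acts as a three-term recurrence in the level.

   Upper bound: f m = 1 + q + ... + q^(h - max m n) satisfies Delta f = q^(h+1-n) y_n, so
   q^(h+1-n) y_n lies in Lambda.

   Lower bound: z m = 1 - q^(h+1-m) is annihilated by Delta away from the root.  If
   k y_n = sum_u c_u Delta_u, pairing with z and using the symmetry of Delta gives
   |S_n| z(n) k = c_root d (z(0) - z(1)), i.e. d q^(n-1) (1 - q^(h+1-n)) k = c_root d q^h (1 - q).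
   Cancelling d q^(n-1), q^(h+1-n) divides (1 - q^(h+1-n)) k, hence k. *)

definition num_children :: "nat \<Rightarrow> nat list \<Rightarrow> nat" where
  "num_children d w = (if w = [] then d else d - 1)"

lemma finite_tree_vertices: "finite (tree_vertices d h)"
proof -
  have "tree_vertices d h \<subseteq> {xs. set xs \<subseteq> {..<d} \<and> length xs \<le> h}"
    by (force simp: tree_vertices_def in_set_conv_nth split: if_splits)
  then show ?thesis
    using finite_lists_length_le[of "{..<d}" h] finite_subset by blast
qed

lemma Nil_in_tree_vertices: "[] \<in> tree_vertices d h"
  by (simp add: tree_vertices_def)

lemma length_le_if_in_tree_vertices: "w \<in> tree_vertices d h \<Longrightarrow> length w \<le> h"
  by (simp add: tree_vertices_def)

lemma snoc_in_tree_vertices_iff: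
  "w @ [j] \<in> tree_vertices d h \<longleftrightarrow>
     w \<in> tree_vertices d h \<and> length w < h \<and> j < num_children d w"
  unfolding tree_vertices_def num_children_def
  by (auto simp: nth_append less_Suc_eq split: if_splits)

lemma butlast_in_tree_vertices:
  "w \<in> tree_vertices d h \<Longrightarrow> butlast w \<in> tree_vertices d h"
  by (auto simp: tree_vertices_def nth_butlast)

lemma tree_Delta_sym: "tree_Delta d h u w = tree_Delta d h w u"
  unfolding tree_Delta_def tree_adj_def by auto

lemma tree_neighbours:
  assumes "w \<in> tree_vertices d h"
  shows "{u \<in> tree_vertices d h. tree_adj d h u w \<noteq> 0} =
    (if w = [] then {} else {butlast w}) \<union>
    (\<lambda>j. w @ [j]) ` {..<(if length w < h then num_children d w else 0)}"
proof -
  have parent: "(\<exists>j. w = u @ [j]) \<longleftrightarrow> w \<noteq> [] \<and> u = butlast w" for u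
    by (metis snoc_eq_iff_butlast)
  have child: "u \<in> tree_vertices d h \<and> (\<exists>j. u = w @ [j]) \<longleftrightarrow>
      u \<in> (\<lambda>j. w @ [j]) ` {..<(if length w < h then num_children d w else 0)}" for u
    using assms by (auto simp: snoc_in_tree_vertices_iff)
  have "{u \<in> tree_vertices d h. tree_adj d h u w \<noteq> 0} =
      {u \<in> tree_vertices d h. \<exists>j. w = u @ [j]} \<union> {u \<in> tree_vertices d h. \<exists>j. u = w @ [j]}"
    using assms by (auto simp: tree_adj_def)
  also have "{u \<in> tree_vertices d h. \<exists>j. w = u @ [j]} = (if w = [] then {} else {butlast w})"
    using butlast_in_tree_vertices[OF assms] by (auto simp: parent)
  also have "{u \<in> tree_vertices d h. \<exists>j. u = w @ [j]} =
      (\<lambda>j. w @ [j]) ` {..<(if length w < h then num_children d w else 0)}"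
    using child by blast
  finally show ?thesis .
qed

lemma sum_tree_adj:
  fixes c :: "nat list \<Rightarrow> int"
  assumes w: "w \<in> tree_vertices d h"
  shows "(\<Sum>u\<in>tree_vertices d h. c u * tree_adj d h u w) =
    (if w = [] then 0 else c (butlast w)) +
    (if length w < h then (\<Sum>j<num_children d w. c (w @ [j])) else 0)"
proof -
  let ?N = "{u \<in> tree_vertices d h. tree_adj d h u w \<noteq> 0}"
  let ?P = "if w = [] then {} else {butlast w}"
  let ?C = "(\<lambda>j. w @ [j]) ` {..<(if length w < h then num_children d w else 0)}"
  have "(\<Sum>u\<in>tree_vertices d h. c u * tree_adj d h u w) = (\<Sum>u\<in>?N. c u)"
    by (rule sum.mono_neutral_cong_right) (auto simp: finite_tree_vertices tree_adj_def)
  also have "\<dots> = (\<Sum>u\<in>?P. c u) + (\<Sum>u\<in>?C. c u)"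
    unfolding tree_neighbours[OF w]
    by (rule sum.union_disjoint) (auto dest: arg_cong[of _ _ length])
  also have "(\<Sum>u\<in>?C. c u) = (\<Sum>j<(if length w < h then num_children d w else 0). c (w @ [j]))"
    by (subst sum.reindex) (auto simp: inj_on_def)
  finally show ?thesis
    by simp
qed

(* (Delta f)(w) for a function f of the level m of w, provided f (h + 1) = 0: this makes the
   children term vanish at the leaves. *)
definition level_laplacian :: "nat \<Rightarrow> (nat \<Rightarrow> int) \<Rightarrow> nat \<Rightarrow> int" where
  "level_laplacian d f m =
     (if m = 0 then int d * (f 0 - f 1) else int d * f m - f (m - 1) - int (d - 1) * f (m + 1))"

lemma sum_radial_tree_Delta:
  assumes f: "f (Suc h) = 0" and w: "w \<in> tree_vertices d h"
  shows "(\<Sum>u\<in>tree_vertices d h. f (length u) * tree_Delta d h u w) = level_laplacian d f (length w)"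
proof -
  have "length w \<le> h"
    using w by (rule length_le_if_in_tree_vertices)
  then have adj: "(\<Sum>u\<in>tree_vertices d h. f (length u) * tree_adj d h u w) =
      (if w = [] then 0 else f (length w - 1)) + int (num_children d w) * f (length w + 1)"
    using sum_tree_adj[OF w, of "\<lambda>u. f (length u)"] f by (auto simp: length_butlast)
  have "(\<Sum>u\<in>tree_vertices d h. f (length u) * tree_Delta d h u w) =
      int d * f (length w) - (\<Sum>u\<in>tree_vertices d h. f (length u) * tree_adj d h u w)"
  proof -
    have "(\<Sum>u\<in>tree_vertices d h. f (length u) * tree_Delta d h u w) =
        (\<Sum>u\<in>tree_vertices d h.
          (if u = w then int d * f (length u) else 0) - f (length u) * tree_adj d h u w)"
      by (intro sum.cong) (auto simp: tree_Delta_def algebra_simps)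
    then show ?thesis
      using w by (simp add: sum_subtractf sum.delta' finite_tree_vertices)
  qed
  then show ?thesis
    unfolding adj by (auto simp: level_laplacian_def num_children_def algebra_simps)
qed

definition tree_level :: "nat \<Rightarrow> nat \<Rightarrow> nat \<Rightarrow> nat list set" where
  "tree_level d h n = {w \<in> tree_vertices d h. length w = n}"

lemma tree_level_Suc:
  assumes "n < h"
  shows "tree_level d h (Suc n) =
    (\<lambda>(w, j). w @ [j]) ` (SIGMA w:tree_level d h n. {..<num_children d w})"
proof (intro equalityI subsetI)
  fix u assume u: "u \<in> tree_level d h (Suc n)"
  then obtain w j where "u = w @ [j]"
    by (cases u rule: rev_cases) (auto simp: tree_level_def)
  with u show "u \<in> (\<lambda>(w, j). w @ [j]) ` (SIGMA w:tree_level d h n. {..<num_children d w})"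
    by (auto simp: tree_level_def snoc_in_tree_vertices_iff)
qed (use assms in \<open>auto simp: tree_level_def snoc_in_tree_vertices_iff\<close>)

lemma card_tree_level:
  "n \<le> h \<Longrightarrow> card (tree_level d h n) = (if n = 0 then 1 else d * (d - 1) ^ (n - 1))"
proof (induction n)
  case 0
  have "tree_level d h 0 = {[]}"
    by (auto simp: tree_level_def Nil_in_tree_vertices)
  then show ?case
    by simp
next
  case (Suc n)
  have children: "num_children d w = (if n = 0 then d else d - 1)" if "w \<in> tree_level d h n" for w
    using that by (auto simp: tree_level_def num_children_def)
  have "card (tree_level d h (Suc n)) = card (SIGMA w:tree_level d h n. {..<num_children d w})"
    unfolding tree_level_Suc[OF Suc_le_lessD[OF Suc.prems]]
    by (rule card_image) (auto simp: inj_on_def)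
  also have "\<dots> = card (tree_level d h n) * (if n = 0 then d else d - 1)"
    using finite_tree_vertices[of d h] by (simp add: tree_level_def children)
  finally show ?case
    using Suc by (simp add: power_eq_if)
qed

lemma sum_radial_level_vector:
  "(\<Sum>w\<in>tree_vertices d h. g (length w) * level_vector d h n w) = int (card (tree_level d h n)) * g n"
proof -
  have "(\<Sum>w\<in>tree_vertices d h. g (length w) * level_vector d h n w) = (\<Sum>w\<in>tree_level d h n. g n)"
    unfolding tree_level_def sum.inter_filter[OF finite_tree_vertices]
    by (rule sum.cong) (auto simp: level_vector_def)
  then show ?thesis
    by simp
qed

lemma level_laplacian_root_dvd_pairing:
  assumes v: "in_tree_lattice d h v" and f: "f (Suc h) = 0"
    and harmonic: "\<And>m. 0 < m \<Longrightarrow> m \<le> h \<Longrightarrow> level_laplacian d f m = 0"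
  shows "level_laplacian d f 0 dvd (\<Sum>w\<in>tree_vertices d h. f (length w) * v w)"
proof -
  let ?V = "tree_vertices d h"
  obtain c where c: "\<forall>w\<in>?V. v w = (\<Sum>u\<in>?V. c u * tree_Delta d h u w)"
    using v unfolding in_tree_lattice_def by blast
  have "(\<Sum>w\<in>?V. f (length w) * v w) = (\<Sum>w\<in>?V. \<Sum>u\<in>?V. f (length w) * (c u * tree_Delta d h u w))"
    using c by (intro sum.cong) (simp_all add: sum_distrib_left)
  also have "\<dots> = (\<Sum>u\<in>?V. \<Sum>w\<in>?V. c u * (f (length w) * tree_Delta d h w u))"
    by (subst sum.swap) (simp only: mult.left_commute tree_Delta_sym[of d h _ u for u])
  also have "\<dots> = (\<Sum>u\<in>?V. c u * (\<Sum>w\<in>?V. f (length w) * tree_Delta d h w u))"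
    by (simp add: sum_distrib_left)
  also have "\<dots> = (\<Sum>u\<in>?V. if u = [] then c u * level_laplacian d f 0 else 0)"
    using harmonic
    by (intro sum.cong) (auto simp: sum_radial_tree_Delta[of f h, OF f] length_le_if_in_tree_vertices)
  also have "\<dots> = c [] * level_laplacian d f 0"
    by (simp add: sum.delta' finite_tree_vertices Nil_in_tree_vertices)
  finally show ?thesis
    by simp
qed

lemma level_laplacian_one_minus_power_eq_0:
  assumes "d \<ge> 1" "0 < m" "m \<le> h"
  shows "level_laplacian d (\<lambda>m. 1 - (int d - 1) ^ (h + 1 - m)) m = 0"
proof -
  obtain j where j: "h + 1 - m = Suc j"
    using assms by (metis Suc_diff_le Suc_eq_plus1)
  then have "h + 1 - (m - 1) = Suc (Suc j)" "h + 1 - (m + 1) = j"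
    using assms by auto
  then show ?thesis
    using assms j by (simp add: level_laplacian_def algebra_simps)
qed

lemma level_laplacian_geometric_sum:
  assumes "d \<ge> 1" "1 \<le> n" "n \<le> h" "m \<le> h"
  shows "level_laplacian d (\<lambda>m. \<Sum>i < h + 1 - max m n. (int d - 1) ^ i) m =
    (if m = n then (int d - 1) ^ (h + 1 - n) else 0)"
proof -
  define q where "q = int d - 1"
  define G where "G j = (\<Sum>i<j. q ^ i)" for j
  have G_Suc: "G (Suc j) = G j + q ^ j" "G (Suc j) = 1 + q * G j" for j
    unfolding G_def by (simp, simp add: sum.lessThan_Suc_shift sum_distrib_left del: sum.lessThan_Suc)
  have d: "int d = q + 1" "int (d - 1) = q"
    using assms by (simp_all add: q_def)
  obtain e where e: "h + 1 - n = Suc e"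
    using assms by (metis Suc_diff_le Suc_eq_plus1)
  have "level_laplacian d (\<lambda>m. G (h + 1 - max m n)) m = (if m = n then q ^ (h + 1 - n) else 0)"
  proof -
    consider "m = 0" | "0 < m" "m < n" | "m = n" | "n < m"
      by linarith
    then show ?thesis
    proof cases
      case 1
      with assms show ?thesis
        by (simp add: level_laplacian_def max_def)
    next
      case 2
      then have "max (m - 1) n = n" "max m n = n" "max (m + 1) n = n"
        by auto
      with 2 show ?thesis
        unfolding level_laplacian_def d by (simp add: algebra_simps)
    next
      case 3
      then have "h + 1 - max (m - 1) n = Suc e" "h + 1 - max m n = Suc e" "h + 1 - max (m + 1) n = e"
        using e by auto
      with 3 e assms(2) show ?thesis
        unfolding level_laplacian_def d by (simp add: G_Suc(1) algebra_simps)
    next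
      case 4
      obtain i where i: "h + 1 - m = Suc i"
        using assms by (metis Suc_diff_le Suc_eq_plus1)
      with 4 have "h + 1 - max (m - 1) n = Suc (Suc i)" "h + 1 - max m n = Suc i"
        "h + 1 - max (m + 1) n = i"
        by auto
      with 4 show ?thesis
        unfolding level_laplacian_def d by (simp add: G_Suc(2) algebra_simps)
    qed
  qed
  then show ?thesis
    by (simp add: G_def q_def)
qed

lemma in_tree_lattice_level_vector:
  assumes "d \<ge> 1" "1 \<le> n" "n \<le> h"
  shows "in_tree_lattice d h (\<lambda>w. int ((d - 1) ^ (h + 1 - n)) * level_vector d h n w)"
proof -
  define f where "f = (\<lambda>m. \<Sum>i < h + 1 - max m n. (int d - 1) ^ i)"
  have f: "f (Suc h) = 0"
    by (simp add: f_def)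
  have radial: "(\<Sum>u\<in>tree_vertices d h. f (length u) * tree_Delta d h u w) =
      int ((d - 1) ^ (h + 1 - n)) * level_vector d h n w" if w: "w \<in> tree_vertices d h" for w
  proof -
    have "(\<Sum>u\<in>tree_vertices d h. f (length u) * tree_Delta d h u w) = level_laplacian d f (length w)"
      by (rule sum_radial_tree_Delta[of f h, OF f w])
    also have "\<dots> = (if length w = n then (int d - 1) ^ (h + 1 - n) else 0)"
      unfolding f_def by (rule level_laplacian_geometric_sum[OF assms length_le_if_in_tree_vertices[OF w]])
    also have "\<dots> = int ((d - 1) ^ (h + 1 - n)) * level_vector d h n w"
      using w assms(1) by (simp add: level_vector_def of_nat_diff)
    finally show ?thesis .
  qed
  show ?thesis
    unfolding in_tree_lattice_def by (rule exI[of _ "\<lambda>u. f (length u)"]) (simp add: radial)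
qed

lemma tree_lattice_level_vector_dvd:
  assumes "d \<ge> 2" "1 \<le> n" "n \<le> h"
    and k: "in_tree_lattice d h (\<lambda>w. int k * level_vector d h n w)"
  shows "(d - 1) ^ (h + 1 - n) dvd k"
proof -
  define q where "q = int d - 1"
  define e where "e = h + 1 - n"
  define z where "z m = 1 - q ^ (h + 1 - m)" for m
  have h: "h = (n - 1) + e"
    using assms by (simp add: e_def)
  have "level_laplacian d z 0 dvd (\<Sum>w\<in>tree_vertices d h. z (length w) * (int k * level_vector d h n w))"
  proof (rule level_laplacian_root_dvd_pairing[OF k])
    show "z (Suc h) = 0"
      by (simp add: z_def)
    have "z = (\<lambda>m. 1 - (int d - 1) ^ (h + 1 - m))"
      by (simp add: z_def q_def fun_eq_iff)
    then show "level_laplacian d z m = 0" if "0 < m" "m \<le> h" for m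
      using assms(1) that level_laplacian_one_minus_power_eq_0[of d m h] by simp
  qed
  also have "level_laplacian d z 0 = (int d * q ^ (n - 1)) * (q ^ e * (1 - q))"
    unfolding level_laplacian_def z_def using h by (simp add: power_add algebra_simps)
  also have "(\<Sum>w\<in>tree_vertices d h. z (length w) * (int k * level_vector d h n w)) =
      (int d * q ^ (n - 1)) * ((1 - q ^ e) * int k)"
    using sum_radial_level_vector[of "\<lambda>m. z m * int k" d h n] card_tree_level[OF assms(3), of d] assms
    by (simp add: z_def e_def q_def ac_simps)
  finally have "q ^ e * (1 - q) dvd (1 - q ^ e) * int k"
    using assms(1) by (simp add: q_def)
  then have "q ^ e dvd (1 - q ^ e) * int k"
    using dvd_mult_left by blast
  moreover have "coprime (q ^ e) (1 - q ^ e)"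
    using coprime_doff_one_right[of "q ^ e"] by (metis coprime_minus_right_iff minus_diff_eq)
  ultimately have "q ^ e dvd int k"
    by (simp add: coprime_dvd_mult_right_iff)
  moreover have "q ^ e = int ((d - 1) ^ e)"
    using assms(1) by (simp add: q_def of_nat_diff)
  ultimately show ?thesis
    unfolding e_def by (simp only: int_dvd_int_iff)
qed

lemma tree_group_order_eqI:
  assumes "0 < M" "in_tree_lattice d h (\<lambda>w. int M * v w)"
    and "\<And>k. 0 < k \<Longrightarrow> in_tree_lattice d h (\<lambda>w. int k * v w) \<Longrightarrow> M dvd k"
  shows "tree_group_order d h v = M"
  unfolding tree_group_order_def using assms by (auto intro!: Least_equality dvd_imp_le)

theorem proposition7p7:
  fixes d h n :: nat
  assumes "d \<ge> 3" and "h \<ge> 1" and "1 \<le> n" and "n \<le> h"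
  shows "tree_group_order d h (level_vector d h n) = (d - 1) ^ (h + 1 - n)"
proof (rule tree_group_order_eqI)
  show "0 < (d - 1) ^ (h + 1 - n)"
    using assms(1) by simp
  show "in_tree_lattice d h (\<lambda>w. int ((d - 1) ^ (h + 1 - n)) * level_vector d h n w)"
    using assms by (intro in_tree_lattice_level_vector) auto
  show "(d - 1) ^ (h + 1 - n) dvd k" if "in_tree_lattice d h (\<lambda>w. int k * level_vector d h n w)" for k
    using assms that by (intro tree_lattice_level_vector_dvd) auto
qed

end
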